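(* In the setting described in the context, as $n\to\infty$, \[ (1-\rho^{(n)})\,\mathbb{E}[N^{(n)}]=\Theta(1)\quad\text{and}\quad\mathbb{E}[I^{(n)}]=\Theta(1). \]
   Context: For each $n\geq1$: a single-server queue with unit service speed; i.i.d. interarrival times $A^{(n)}_i$ and i.i.d. job sizes $B^{(n)}_i$ (independent, positive), $A^{(n)}=A^{(n)}_1$, $B^{(n)}=B^{(n)}_1$, load $\rho^{(n)}=\mathbb{E}[B^{(n)}]/\mathbb{E}[A^{(n)}]$. Standing assumptions: constants $\rho_0\in(0,1)$, $A_{\min}>0$ independent of $n$ with $\rho_0A_{\min}\leq\rho_0\mathbb{E}[A^{(n)}]\leq\mathbb{E}[B^{(n)}]<\mathbb{E}[A^{(n)}]$; $\rho^{(n)}\to1$; $A^{(n)}$ has finite variance and $\limsup_n\mathbb{E}[(A^{(n)})^2]<\infty$; constants $\delta,\gamma>0$ independent of $n$ with $\mathbb{P}(B^{(n)}-A^{(n)}\geq\delta)\geq\gamma$. Let $S_m=\sum_{i=1}^m(B^{(n)}_i-A^{(n)}_i)$. $N^{(n)}=\inf\{m\geq1:S_m\leq0\}$ is the number of jobs in a generic busy period (started by an arrival to an empty system, ending when the system next empties), and $I^{(n)}=-S_{N^{(n)}}$ is the duration of the idle period following it (time from the end of a busy period until the next arrival). *)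

theory Defs
  imports "HOL-Probability.Probability"
begin

text \<open>Random walk S_m = sum_{i=1}^m (B_i - A_i); here jobs are indexed from 0,
  so S_m = sum over i < m.\<close>
definition walk :: "(nat \<Rightarrow> 'a \<Rightarrow> real) \<Rightarrow> (nat \<Rightarrow> 'a \<Rightarrow> real) \<Rightarrow> nat \<Rightarrow> 'a \<Rightarrow> real" where
  "walk A B m \<omega> = (\<Sum>i<m. B i \<omega> - A i \<omega>)"

definition busy_jobs :: "(nat \<Rightarrow> 'a \<Rightarrow> real) \<Rightarrow> (nat \<Rightarrow> 'a \<Rightarrow> real) \<Rightarrow> 'a \<Rightarrow> enat" where
  "busy_jobs A B \<omega> =
     (if \<exists>m\<ge>1. walk A B m \<omega> \<le> 0 then enat (LEAST m. m \<ge> 1 \<and> walk A B m \<omega> \<le> 0) else \<infinity>)"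

text \<open>Idle period I = - S_N (set to 0 on the event N = infinity, which is null).\<close>
definition idle_time :: "(nat \<Rightarrow> 'a \<Rightarrow> real) \<Rightarrow> (nat \<Rightarrow> 'a \<Rightarrow> real) \<Rightarrow> 'a \<Rightarrow> real" where
  "idle_time A B \<omega> = (case busy_jobs A B \<omega> of enat m \<Rightarrow> - walk A B m \<omega> | \<infinity> \<Rightarrow> 0)"

end

theory Submission
  imports Defs
begin

text \<open>The idle time is I = - S N = \<Sum>i<N. (A i - B i) and N is a stopping time, so Wald's
  identity gives E I = (E A - E B) E N, i.e. (1 - \<rho>) E N = E I / E A; as E A is bounded above and
  below, it remains to bound E I.
  From below, I \<ge> max (A 0 - B 0) 0, whose mean exceeds that of max (B 0 - A 0) 0 \<ge> \<delta> \<gamma>.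
  From above, the last job of the busy period arrives when the walk is at S (N - 1) \<ge> 0, and
  I \<le> A (N - 1), which exceeds k \<delta> when S (N - 1) lies in the band [k \<delta>, (k + 1) \<delta>). Reversing
  the order of the first n jobs, the event that S 1, ..., S n > 0 with S n in a band has the
  probability that n is a strict ascending ladder epoch in that band. Each such ladder epoch is
  followed, with probability at least \<gamma>, by a step of at least \<delta> that leaves the band for good,
  so a band contains at most 1 / \<gamma> ladder epochs on average. Summing over the bands gives
  E I \<le> (E (A^2) / \<delta> + E A) / \<gamma>.\<close>

lemma (in prob_space) indep_var_nn_integral_mult:
  assumes ind: "indep_var S X T Y"
    and f[measurable]: "f \<in> borel_measurable S" and g[measurable]: "g \<in> borel_measurable T"
  shows "(\<integral>\<^sup>+\<omega>. f (X \<omega>) * g (Y \<omega>) \<partial>M) = (\<integral>\<^sup>+\<omega>. f (X \<omega>) \<partial>M) * (\<integral>\<^sup>+\<omega>. g (Y \<omega>) \<partial>M)"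
proof -
  have rv[measurable]: "random_variable S X" "random_variable T Y" and
    eq: "distr M S X \<Otimes>\<^sub>M distr M T Y = distr M (S \<Otimes>\<^sub>M T) (\<lambda>x. (X x, Y x))"
    using ind unfolding indep_var_distribution_eq by auto
  interpret X: prob_space "distr M S X" by (rule prob_space_distr) fact
  interpret Y: prob_space "distr M T Y" by (rule prob_space_distr) fact
  interpret XY: pair_sigma_finite "distr M S X" "distr M T Y" ..
  have "(\<integral>\<^sup>+\<omega>. f (X \<omega>) * g (Y \<omega>) \<partial>M) = (\<integral>\<^sup>+z. f (fst z) * g (snd z) \<partial>(distr M S X \<Otimes>\<^sub>M distr M T Y))"
    by (simp add: eq nn_integral_distr)
  also have "\<dots> = (\<integral>\<^sup>+x. \<integral>\<^sup>+y. f x * g y \<partial>distr M T Y \<partial>distr M S X)"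
    by (subst Y.nn_integral_fst[symmetric]) auto
  also have "\<dots> = (\<integral>\<^sup>+x. f x \<partial>distr M S X) * (\<integral>\<^sup>+y. g y \<partial>distr M T Y)"
    by (simp add: nn_integral_cmult nn_integral_multc)
  also have "\<dots> = (\<integral>\<^sup>+\<omega>. f (X \<omega>) \<partial>M) * (\<integral>\<^sup>+\<omega>. g (Y \<omega>) \<partial>M)"
    by (simp add: nn_integral_distr)
  finally show ?thesis .
qed

lemma (in prob_space) expectation_le_one_plus_second_moment:
  fixes X :: "'a \<Rightarrow> real"
  assumes "integrable M X" "integrable M (\<lambda>\<omega>. (X \<omega>)\<^sup>2)"
  shows "expectation X \<le> 1 + expectation (\<lambda>\<omega>. (X \<omega>)\<^sup>2)"
proof -
  have "expectation X \<le> expectation (\<lambda>\<omega>. 1 + (X \<omega>)\<^sup>2)"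
  proof (rule integral_mono)
    show "X \<omega> \<le> 1 + (X \<omega>)\<^sup>2" for \<omega>
      using sum_squares_ge_zero[of "X \<omega> - 1/2" 0] by (simp add: power2_eq_square algebra_simps)
  qed (use assms in auto)
  also have "\<dots> = 1 + expectation (\<lambda>\<omega>. (X \<omega>)\<^sup>2)"
    using assms by (simp add: prob_space)
  finally show ?thesis .
qed

lemma ennreal_le_suminf: "(f n :: ennreal) \<le> suminf f"
  using sum_le_suminf[of f "{n}"] by (simp add: summableI)

lemma nat_floor_divide_bounds:
  fixes x d :: real
  assumes "0 \<le> x" "0 < d"
  shows "real (nat \<lfloor>x / d\<rfloor>) * d \<le> x" "x < real (nat \<lfloor>x / d\<rfloor>) * d + d"
proof -
  have e: "real (nat \<lfloor>x / d\<rfloor>) = of_int \<lfloor>x / d\<rfloor>" using assms by simp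
  have "of_int \<lfloor>x / d\<rfloor> \<le> x / d" "x / d < of_int \<lfloor>x / d\<rfloor> + 1" by linarith+
  then show "real (nat \<lfloor>x / d\<rfloor>) * d \<le> x" "x < real (nat \<lfloor>x / d\<rfloor>) * d + d"
    using assms e by (simp_all add: le_divide_eq divide_less_eq algebra_simps)
qed

lemma sum_lessThan_rev:
  fixes f :: "nat \<Rightarrow> 'a::ab_group_add"
  assumes "k \<le> n"
  shows "(\<Sum>i<k. f (n - 1 - i)) = (\<Sum>i<n. f i) - (\<Sum>i<n - k. f i)"
  using assms
proof (induction k)
  case (Suc k)
  have "n - k = Suc (n - Suc k)" using Suc.prems by simp
  then show ?case using Suc by (simp add: algebra_simps)
qed simp

lemma ball_less_rev_iff:
  fixes s :: "nat \<Rightarrow> 'a::order"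
  shows "(\<forall>k\<in>{1..n}. s (n - k) < s n) \<longleftrightarrow> (\<forall>j<n. s j < s n)"
proof
  assume h: "\<forall>k\<in>{1..n}. s (n - k) < s n"
  show "\<forall>j<n. s j < s n"
  proof (intro allI impI)
    fix j assume "j < n"
    then have "n - j \<in> {1..n}" "n - (n - j) = j" by auto
    then show "s j < s n" using h by metis
  qed
next
  assume "\<forall>j<n. s j < s n"
  then show "\<forall>k\<in>{1..n}. s (n - k) < s n" by auto
qed

lemma ex_le_bounds_eventually:
  assumes "0 < c" "\<forall>\<^sub>F n in F. ennreal c \<le> x n \<and> x n \<le> ennreal C"
  shows "\<exists>c C. 0 < c \<and> c \<le> C \<and> (\<forall>\<^sub>F n in F. ennreal c \<le> x n \<and> x n \<le> ennreal C)"
proof (intro exI conjI)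
  show "\<forall>\<^sub>F n in F. ennreal c \<le> x n \<and> x n \<le> ennreal (max c C)"
    using assms(2) by eventually_elim (metis max.cobounded2 ennreal_leI order_trans)
qed (use assms in auto)

lemma limsup_ereal_lt_top_imp_eventually_le:
  fixes f :: "nat \<Rightarrow> real"
  assumes "limsup (\<lambda>n. ereal (f n)) < \<infinity>"
  obtains r where "0 \<le> r" "\<forall>\<^sub>F n in sequentially. f n \<le> r"
proof -
  obtain r where "limsup (\<lambda>n. ereal (f n)) < ereal r"
    using ereal_dense2[OF assms] by blast
  then have "\<forall>\<^sub>F n in sequentially. f n < r"
    using Limsup_lessD by fastforce
  then show ?thesis
    by (intro that[of "max r 0"]) (auto elim: eventually_mono)
qed

definition stays_positive :: "(nat \<Rightarrow> 'a \<Rightarrow> real) \<Rightarrow> (nat \<Rightarrow> 'a \<Rightarrow> real) \<Rightarrow> nat \<Rightarrow> 'a \<Rightarrow> bool" where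
  "stays_positive A B n \<omega> \<longleftrightarrow> (\<forall>k\<in>{1..n}. 0 < walk A B k \<omega>)"

definition ladder_epoch :: "(nat \<Rightarrow> 'a \<Rightarrow> real) \<Rightarrow> (nat \<Rightarrow> 'a \<Rightarrow> real) \<Rightarrow> nat \<Rightarrow> 'a \<Rightarrow> bool" where
  "ladder_epoch A B n \<omega> \<longleftrightarrow> (\<forall>j<n. walk A B j \<omega> < walk A B n \<omega>)"

lemma walk_0 [simp]: "walk A B 0 \<omega> = 0"
  by (simp add: walk_def)

lemma walk_Suc: "walk A B (Suc n) \<omega> = walk A B n \<omega> + (B n \<omega> - A n \<omega>)"
  by (simp add: walk_def)

lemma stays_positive_walk_nonneg: "stays_positive A B n \<omega> \<Longrightarrow> 0 \<le> walk A B n \<omega>"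
  by (cases "n = 0") (auto simp: stays_positive_def intro: less_imp_le)

lemma less_busy_jobs_iff: "enat n < busy_jobs A B \<omega> \<longleftrightarrow> stays_positive A B n \<omega>"
proof (cases "\<exists>m\<ge>1. walk A B m \<omega> \<le> 0")
  case True
  let ?L = "LEAST m. m \<ge> 1 \<and> walk A B m \<omega> \<le> 0"
  have L: "1 \<le> ?L" "walk A B ?L \<omega> \<le> 0"
    using LeastI_ex[OF True[unfolded Bex_def]] by auto
  have "0 < walk A B k \<omega>" if "1 \<le> k" "k < ?L" for k
    using not_less_Least[OF that(2)] that(1) by auto
  moreover have "n < ?L" if "\<forall>k\<in>{1..n}. 0 < walk A B k \<omega>"
  proof (rule ccontr)
    assume "\<not> n < ?L"
    with L have "?L \<in> {1..n}" by auto
    with that L(2) show False by fastforce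
  qed
  ultimately have "n < ?L \<longleftrightarrow> (\<forall>k\<in>{1..n}. 0 < walk A B k \<omega>)"
    by auto
  then show ?thesis using True by (simp add: busy_jobs_def stays_positive_def)
next
  case False
  then show ?thesis by (auto simp: busy_jobs_def stays_positive_def)
qed

lemma busy_jobs_enatD:
  assumes "busy_jobs A B \<omega> = enat m"
  shows "1 \<le> m" "walk A B m \<omega> \<le> 0"
proof -
  have ex: "\<exists>m\<ge>1. walk A B m \<omega> \<le> 0"
    using assms by (auto simp: busy_jobs_def split: if_splits)
  have "m = (LEAST m. m \<ge> 1 \<and> walk A B m \<omega> \<le> 0)"
    using assms ex by (simp add: busy_jobs_def)
  then show "1 \<le> m" "walk A B m \<omega> \<le> 0"
    using LeastI_ex[OF ex[unfolded Bex_def]] by auto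
qed

lemma idle_time_enat: "busy_jobs A B \<omega> = enat m \<Longrightarrow> idle_time A B \<omega> = - walk A B m \<omega>"
  by (simp add: idle_time_def)

lemma idle_time_infinity: "busy_jobs A B \<omega> = \<infinity> \<Longrightarrow> idle_time A B \<omega> = 0"
  by (simp add: idle_time_def)

lemma idle_time_nonneg: "0 \<le> idle_time A B \<omega>"
  using busy_jobs_enatD[of A B \<omega>] by (cases "busy_jobs A B \<omega>") (auto simp: idle_time_def)

lemma idle_time_eq_sum:
  "busy_jobs A B \<omega> = enat m \<Longrightarrow> idle_time A B \<omega> = (\<Sum>i<m. A i \<omega> - B i \<omega>)"
  by (simp add: idle_time_enat walk_def sum_negf[symmetric])

definition history_walk :: "(nat \<Rightarrow> real \<times> real) \<Rightarrow> nat \<Rightarrow> real" where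
  "history_walk v k = (\<Sum>i<k. snd (v i) - fst (v i))"

definition rev_history :: "nat \<Rightarrow> (nat \<Rightarrow> real \<times> real) \<Rightarrow> nat \<Rightarrow> real \<times> real" where
  "rev_history n v = (\<lambda>i\<in>{..<n}. v (n - 1 - i))"

lemma history_walk_rev_history:
  assumes "k \<le> n"
  shows "history_walk (rev_history n v) k = history_walk v n - history_walk v (n - k)"
proof -
  have "history_walk (rev_history n v) k = (\<Sum>i<k. (\<lambda>j. snd (v j) - fst (v j)) (n - 1 - i))"
    unfolding history_walk_def rev_history_def using assms by (intro sum.cong) auto
  then show ?thesis
    using sum_lessThan_rev[OF assms, of "\<lambda>j. snd (v j) - fst (v j)"] by (simp add: history_walk_def)
qed

lemma component_measurable[measurable]:
  "(\<lambda>v. v i) \<in> measurable (PiM {..<n} (\<lambda>_. borel \<Otimes>\<^sub>M borel)) (borel \<Otimes>\<^sub>M borel :: (real \<times> real) measure)"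
proof (cases "i < n")
  case False
  have "(\<lambda>_. undefined) \<in> measurable (PiM {..<n} (\<lambda>_. borel \<Otimes>\<^sub>M borel)) (borel \<Otimes>\<^sub>M borel :: (real \<times> real) measure)"
    by (auto intro!: measurable_const simp: space_pair_measure)
  then show ?thesis
    by (rule measurable_cong[THEN iffD1, rotated]) (use False in \<open>auto simp: space_PiM PiE_def extensional_def\<close>)
qed (auto intro: measurable_component_singleton)

lemma history_walk_measurable[measurable]:
  "(\<lambda>v. history_walk v k) \<in> borel_measurable (PiM {..<n} (\<lambda>_. borel \<Otimes>\<^sub>M borel))"
  unfolding history_walk_def by measurable

lemma rev_history_measurable[measurable]:
  "rev_history n \<in> measurable (PiM {..<n} (\<lambda>_. borel \<Otimes>\<^sub>M borel)) (PiM {..<n} (\<lambda>_. borel \<Otimes>\<^sub>M borel))"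
  unfolding rev_history_def by measurable

locale gg1_queue = prob_space M for M :: "'a measure" +
  fixes A B :: "nat \<Rightarrow> 'a \<Rightarrow> real" and \<delta> \<gamma> :: real
  assumes indep: "indep_vars (\<lambda>_. borel) (\<lambda>k. case k of Inl i \<Rightarrow> A i | Inr i \<Rightarrow> B i) (UNIV :: (nat + nat) set)"
    and A_id: "\<And>i. distr M borel (A i) = distr M borel (A 0)"
    and B_id: "\<And>i. distr M borel (B i) = distr M borel (B 0)"
    and A_pos: "\<And>i \<omega>. \<omega> \<in> space M \<Longrightarrow> A i \<omega> > 0"
    and B_pos: "\<And>i \<omega>. \<omega> \<in> space M \<Longrightarrow> B i \<omega> > 0"
    and A_int: "integrable M (A 0)"
    and B_int: "integrable M (B 0)"
    and A_sq_int: "integrable M (\<lambda>\<omega>. (A 0 \<omega>)\<^sup>2)"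
    and drift: "expectation (B 0) < expectation (A 0)"
    and \<delta>_pos: "\<delta> > 0" and \<gamma>_pos: "\<gamma> > 0"
    and jump: "prob {\<omega> \<in> space M. B 0 \<omega> - A 0 \<omega> \<ge> \<delta>} \<ge> \<gamma>"
begin

abbreviation N where "N \<equiv> busy_jobs A B"
abbreviation I where "I \<equiv> idle_time A B"

abbreviation job_space :: "(real \<times> real) measure" where
  "job_space \<equiv> borel \<Otimes>\<^sub>M borel"

abbreviation history_space :: "nat \<Rightarrow> (nat \<Rightarrow> real \<times> real) measure" where
  "history_space n \<equiv> PiM {..<n} (\<lambda>_. job_space)"

definition job :: "nat \<Rightarrow> 'a \<Rightarrow> real \<times> real" where
  "job i \<omega> = (A i \<omega>, B i \<omega>)"

definition history :: "nat \<Rightarrow> 'a \<Rightarrow> nat \<Rightarrow> real \<times> real" where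
  "history n \<omega> = restrict (\<lambda>i. job i \<omega>) {..<n}"

lemma A_measurable[measurable]: "A i \<in> borel_measurable M"
  and B_measurable[measurable]: "B i \<in> borel_measurable M"
proof -
  have "(case k of Inl i \<Rightarrow> A i | Inr i \<Rightarrow> B i) \<in> borel_measurable M" for k
    using indep unfolding indep_vars_def by blast
  from this[of "Inl i"] this[of "Inr i"]
  show "A i \<in> borel_measurable M" "B i \<in> borel_measurable M" by simp_all
qed

lemma job_measurable[measurable]: "job i \<in> measurable M job_space"
  unfolding job_def by measurable

lemma history_measurable[measurable]: "history n \<in> measurable M (history_space n)"
  unfolding history_def by measurable

lemma walk_measurable[measurable]: "walk A B k \<in> borel_measurable M"
  unfolding walk_def by measurable

lemma stays_positive_measurable[measurable]: "Measurable.pred M (stays_positive A B n)"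
  unfolding stays_positive_def by measurable

lemma ladder_epoch_measurable[measurable]: "Measurable.pred M (ladder_epoch A B n)"
  unfolding ladder_epoch_def by measurable

lemma busy_jobs_measurable[measurable]: "busy_jobs A B \<in> measurable M (count_space UNIV)"
proof -
  have "busy_jobs A B = (\<lambda>\<omega>. if \<exists>m\<ge>1. walk A B m \<omega> \<le> 0
                               then enat (LEAST m. m \<ge> 1 \<and> walk A B m \<omega> \<le> 0) else \<infinity>)"
    by (simp add: fun_eq_iff busy_jobs_def)
  also have "\<dots> \<in> measurable M (count_space UNIV)"
    by measurable
  finally show ?thesis .
qed

lemma idle_time_measurable[measurable]: "idle_time A B \<in> borel_measurable M"
proof -
  have "idle_time A B = (\<lambda>\<omega>. case busy_jobs A B \<omega> of enat m \<Rightarrow> - walk A B m \<omega> | \<infinity> \<Rightarrow> 0)"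
    by (simp add: fun_eq_iff idle_time_def)
  also have "\<dots> \<in> borel_measurable M"
    by measurable
  finally show ?thesis .
qed

lemma indep_jobs: "indep_vars (\<lambda>_. job_space) job UNIV"
proof -
  let ?Z = "\<lambda>k. case k of Inl i \<Rightarrow> A i | Inr i \<Rightarrow> B i"
  have "indep_vars (\<lambda>j. PiM {Inl j, Inr j} (\<lambda>_. borel)) (\<lambda>j \<omega>. restrict (\<lambda>k. ?Z k \<omega>) {Inl j, Inr j})
          (UNIV :: nat set)"
    by (rule indep_vars_restrict[OF indep]) (auto simp: disjoint_family_on_def)
  then have "indep_vars (\<lambda>_. job_space)
      (\<lambda>j \<omega>. (\<lambda>v. (v (Inl j), v (Inr j))) (restrict (\<lambda>k. ?Z k \<omega>) {Inl j, Inr j})) (UNIV :: nat set)"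
    by (rule indep_vars_compose2) measurable
  then show ?thesis
    by (rule indep_vars_cong[THEN iffD1, rotated 3]) (auto simp: job_def fun_eq_iff)
qed

lemma indep_history_job:
  "indep_var (history_space n) (history n) (PiM {n} (\<lambda>_. job_space)) (\<lambda>\<omega>. restrict (\<lambda>i. job i \<omega>) {n})"
  unfolding history_def by (rule indep_var_restrict[OF indep_jobs]) auto

lemma indep_A_B: "indep_var borel (A n) borel (B n)"
proof -
  let ?Z = "\<lambda>k. case k of Inl i \<Rightarrow> A i | Inr i \<Rightarrow> B i"
  have "indep_var (PiM {Inl n} (\<lambda>_. borel)) (\<lambda>\<omega>. restrict (\<lambda>k. ?Z k \<omega>) {Inl n})
                  (PiM {Inr n} (\<lambda>_. borel)) (\<lambda>\<omega>. restrict (\<lambda>k. ?Z k \<omega>) {Inr n})"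
    by (rule indep_var_restrict[OF indep]) auto
  then have "indep_var borel ((\<lambda>v. v (Inl n)) \<circ> (\<lambda>\<omega>. restrict (\<lambda>k. ?Z k \<omega>) {Inl n}))
                       borel ((\<lambda>v. v (Inr n)) \<circ> (\<lambda>\<omega>. restrict (\<lambda>k. ?Z k \<omega>) {Inr n}))"
    by (rule indep_var_compose) auto
  then show ?thesis by (simp add: comp_def)
qed

lemma distr_job: "distr M job_space (job n) = distr M job_space (job 0)"
proof -
  have "distr M job_space (job n) = distr M borel (A n) \<Otimes>\<^sub>M distr M borel (B n)" for n
    using indep_A_B[of n] unfolding indep_var_distribution_eq job_def by simp
  then show ?thesis by (simp only: A_id[of n] B_id[of n])
qed

lemma nn_integral_job:
  assumes [measurable]: "g \<in> borel_measurable job_space"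
  shows "(\<integral>\<^sup>+\<omega>. g (job n \<omega>) \<partial>M) = (\<integral>\<^sup>+\<omega>. g (job 0 \<omega>) \<partial>M)"
proof -
  have "(\<integral>\<^sup>+\<omega>. g (job n \<omega>) \<partial>M) = (\<integral>\<^sup>+x. g x \<partial>distr M job_space (job n))"
    by (simp add: nn_integral_distr)
  also have "\<dots> = (\<integral>\<^sup>+\<omega>. g (job 0 \<omega>) \<partial>M)"
    by (simp add: distr_job[of n] nn_integral_distr)
  finally show ?thesis .
qed

lemma nn_integral_history_job:
  assumes [measurable]: "f \<in> borel_measurable (history_space n)" "g \<in> borel_measurable job_space"
  shows "(\<integral>\<^sup>+\<omega>. f (history n \<omega>) * g (job n \<omega>) \<partial>M)
       = (\<integral>\<^sup>+\<omega>. f (history n \<omega>) \<partial>M) * (\<integral>\<^sup>+\<omega>. g (job 0 \<omega>) \<partial>M)"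
proof -
  have g': "(\<lambda>v. g (v n)) \<in> borel_measurable (PiM {n} (\<lambda>_. job_space))" by measurable
  show ?thesis
    using indep_var_nn_integral_mult[OF indep_history_job assms(1) g'] nn_integral_job[OF assms(2), of n]
    by simp
qed

lemma nn_integral_history_event_job:
  assumes [measurable]: "Measurable.pred (history_space n) Q" "g \<in> borel_measurable job_space"
  shows "(\<integral>\<^sup>+\<omega>. indicator {\<omega>\<in>space M. Q (history n \<omega>)} \<omega> * g (job n \<omega>) \<partial>M)
       = emeasure M {\<omega>\<in>space M. Q (history n \<omega>)} * (\<integral>\<^sup>+\<omega>. g (job 0 \<omega>) \<partial>M)"
proof -
  let ?f = "\<lambda>v. indicator {v. Q v} v :: ennreal"
  have "(\<integral>\<^sup>+\<omega>. indicator {\<omega>\<in>space M. Q (history n \<omega>)} \<omega> * g (job n \<omega>) \<partial>M)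
      = (\<integral>\<^sup>+\<omega>. ?f (history n \<omega>) * g (job n \<omega>) \<partial>M)"
    by (intro nn_integral_cong) (auto simp: indicator_def)
  also have "\<dots> = (\<integral>\<^sup>+\<omega>. ?f (history n \<omega>) \<partial>M) * (\<integral>\<^sup>+\<omega>. g (job 0 \<omega>) \<partial>M)"
    by (rule nn_integral_history_job) auto
  also have "(\<integral>\<^sup>+\<omega>. ?f (history n \<omega>) \<partial>M) = (\<integral>\<^sup>+\<omega>. indicator {\<omega>\<in>space M. Q (history n \<omega>)} \<omega> \<partial>M)"
    by (intro nn_integral_cong) (auto simp: indicator_def)
  also have "\<dots> = emeasure M {\<omega>\<in>space M. Q (history n \<omega>)}"
    by (rule nn_integral_indicator) measurable
  finally show ?thesis .
qed

text \<open>Duality: the jobs are i.i.d., so reversing their order does not change the law of the history.\<close>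
lemma nn_integral_rev_history:
  assumes f[measurable]: "f \<in> borel_measurable (history_space n)"
  shows "(\<integral>\<^sup>+\<omega>. f (history n \<omega>) \<partial>M) = (\<integral>\<^sup>+\<omega>. f (rev_history n (history n \<omega>)) \<partial>M)"
proof (cases "n = 0")
  case True
  then show ?thesis by (simp add: history_def rev_history_def restrict_def)
next
  case False
  let ?Q = "distr M job_space (job 0)"
  let ?H = "PiM {..<n} (\<lambda>_. ?Q)"
  interpret Q: prob_space ?Q by (rule prob_space_distr) simp
  have law: "distr M (history_space n) (history n) = ?H"
  proof -
    have "indep_vars (\<lambda>_. job_space) job {..<n}" using indep_vars_subset[OF indep_jobs] by auto
    then have "distr M (history_space n) (history n) = PiM {..<n} (\<lambda>i. distr M job_space (job i))"
      using False unfolding history_def by (subst (asm) indep_vars_iff_distr_eq_PiM') auto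
    also have "\<dots> = ?H" by (rule PiM_cong) (rule refl, rule distr_job)
    finally show ?thesis .
  qed
  have [measurable]: "f \<in> borel_measurable ?H" "rev_history n \<in> measurable ?H ?H"
    unfolding law[symmetric] by simp_all
  have rev_law: "distr ?H ?H (rev_history n) = ?H"
    unfolding rev_history_def
    by (rule distr_PiM_reindex) (auto simp: inj_on_def Q.prob_space_axioms)
  have "(\<integral>\<^sup>+\<omega>. f (history n \<omega>) \<partial>M) = (\<integral>\<^sup>+v. f v \<partial>?H)"
    by (subst law[symmetric], subst nn_integral_distr) auto
  also have "\<dots> = (\<integral>\<^sup>+v. f (rev_history n v) \<partial>?H)"
    by (subst (1) rev_law[symmetric], subst nn_integral_distr) auto
  also have "\<dots> = (\<integral>\<^sup>+\<omega>. f (rev_history n (history n \<omega>)) \<partial>M)"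
    by (subst law[symmetric], subst nn_integral_distr) auto
  finally show ?thesis .
qed

lemma history_walk_history: "k \<le> n \<Longrightarrow> history_walk (history n \<omega>) k = walk A B k \<omega>"
  unfolding history_walk_def walk_def history_def job_def by (intro sum.cong) auto

lemma stays_positive_history:
  "stays_positive A B n \<omega> \<longleftrightarrow> (\<forall>k\<in>{1..n}. 0 < history_walk (history n \<omega>) k)"
  by (auto simp: stays_positive_def history_walk_history)

lemma ladder_epoch_history:
  "ladder_epoch A B n \<omega> \<longleftrightarrow> (\<forall>j<n. history_walk (history n \<omega>) j < history_walk (history n \<omega>) n)"
  by (auto simp: ladder_epoch_def history_walk_history)

text \<open>Read backwards from time n, a walk staying positive up to n is one for which n is a
  strict ascending ladder epoch, and the endpoint is the same.\<close>
lemma emeasure_stays_positive_eq_ladder_epoch: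
  assumes [measurable]: "J \<in> sets borel"
  shows "emeasure M {\<omega>\<in>space M. stays_positive A B n \<omega> \<and> walk A B n \<omega> \<in> J}
       = emeasure M {\<omega>\<in>space M. ladder_epoch A B n \<omega> \<and> walk A B n \<omega> \<in> J}"
proof -
  define Q where "Q v \<longleftrightarrow> (\<forall>k\<in>{1..n}. 0 < history_walk v k) \<and> history_walk v n \<in> J" for v
  have [measurable]: "Measurable.pred (history_space n) Q" unfolding Q_def by measurable
  have rev: "Q (rev_history n (history n \<omega>)) \<longleftrightarrow> ladder_epoch A B n \<omega> \<and> walk A B n \<omega> \<in> J" for \<omega>
  proof -
    have "Q (rev_history n (history n \<omega>)) \<longleftrightarrow>
        (\<forall>k\<in>{1..n}. 0 < walk A B n \<omega> - walk A B (n - k) \<omega>) \<and> walk A B n \<omega> \<in> J"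
      by (auto simp: Q_def history_walk_rev_history history_walk_history)
    then show ?thesis
      using ball_less_rev_iff[where s = "\<lambda>k. walk A B k \<omega>"] by (simp add: ladder_epoch_def)
  qed
  let ?P = "{\<omega>\<in>space M. stays_positive A B n \<omega> \<and> walk A B n \<omega> \<in> J}"
  let ?L = "{\<omega>\<in>space M. ladder_epoch A B n \<omega> \<and> walk A B n \<omega> \<in> J}"
  have "emeasure M ?P = (\<integral>\<^sup>+\<omega>. indicator ?P \<omega> \<partial>M)"
    by (rule nn_integral_indicator[symmetric]) measurable
  also have "\<dots> = (\<integral>\<^sup>+\<omega>. indicator {v. Q v} (history n \<omega>) \<partial>M)"
    by (intro nn_integral_cong)
      (auto simp: Q_def indicator_def stays_positive_history history_walk_history)
  also have "\<dots> = (\<integral>\<^sup>+\<omega>. indicator {v. Q v} (rev_history n (history n \<omega>)) \<partial>M)"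
    by (rule nn_integral_rev_history) measurable
  also have "\<dots> = (\<integral>\<^sup>+\<omega>. indicator ?L \<omega> \<partial>M)"
    by (intro nn_integral_cong) (auto simp: rev indicator_def)
  also have "\<dots> = emeasure M ?L"
    by (rule nn_integral_indicator) measurable
  finally show ?thesis .
qed

definition ladder_in :: "real \<Rightarrow> nat \<Rightarrow> 'a set" where
  "ladder_in y n = {\<omega>\<in>space M. ladder_epoch A B n \<omega> \<and> walk A B n \<omega> \<in> {y..<y+\<delta>}}"

definition ladder_exit :: "real \<Rightarrow> nat \<Rightarrow> 'a set" where
  "ladder_exit y n = {\<omega>\<in>space M. ladder_epoch A B n \<omega> \<and> walk A B n \<omega> \<in> {y..<y+\<delta>} \<and> \<delta> \<le> B n \<omega> - A n \<omega>}"

lemma ladder_in_sets[measurable]: "ladder_in y n \<in> sets M"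
  and ladder_exit_sets[measurable]: "ladder_exit y n \<in> sets M"
  unfolding ladder_in_def ladder_exit_def by measurable

lemma emeasure_ladder_exit:
  "emeasure M (ladder_exit y n) = emeasure M (ladder_in y n) * emeasure M {\<omega>\<in>space M. \<delta> \<le> B 0 \<omega> - A 0 \<omega>}"
proof -
  define Q where "Q v \<longleftrightarrow> (\<forall>j<n. history_walk v j < history_walk v n) \<and> history_walk v n \<in> {y..<y+\<delta>}" for v
  define g where "g p = (indicator {p. \<delta> \<le> snd p - fst p} p :: ennreal)" for p :: "real \<times> real"
  have [measurable]: "Measurable.pred (history_space n) Q" unfolding Q_def by measurable
  have [measurable]: "g \<in> borel_measurable job_space" unfolding g_def by measurable
  have ladder: "ladder_in y n = {\<omega>\<in>space M. Q (history n \<omega>)}"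
    by (auto simp: ladder_in_def Q_def ladder_epoch_history history_walk_history)
  have "emeasure M (ladder_exit y n) = (\<integral>\<^sup>+\<omega>. indicator (ladder_exit y n) \<omega> \<partial>M)"
    by (rule nn_integral_indicator[symmetric]) measurable
  also have "\<dots> = (\<integral>\<^sup>+\<omega>. indicator {\<omega>\<in>space M. Q (history n \<omega>)} \<omega> * g (job n \<omega>) \<partial>M)"
    by (intro nn_integral_cong)
      (auto simp: ladder[symmetric] ladder_in_def ladder_exit_def g_def job_def indicator_def)
  also have "\<dots> = emeasure M (ladder_in y n) * (\<integral>\<^sup>+\<omega>. g (job 0 \<omega>) \<partial>M)"
    by (simp add: nn_integral_history_event_job ladder)
  also have "(\<integral>\<^sup>+\<omega>. g (job 0 \<omega>) \<partial>M) = (\<integral>\<^sup>+\<omega>. indicator {\<omega>\<in>space M. \<delta> \<le> B 0 \<omega> - A 0 \<omega>} \<omega> \<partial>M)"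
    by (intro nn_integral_cong) (auto simp: g_def job_def indicator_def)
  finally show ?thesis by simp
qed

text \<open>After a ladder epoch in the band [y, y + \<delta>), a step of size at least \<delta> lifts the walk
  above the band, so no later ladder epoch lies in the band.\<close>
lemma disjoint_family_ladder_exit: "disjoint_family (ladder_exit y)"
proof -
  have False if "n < m" "\<omega> \<in> ladder_exit y n" "\<omega> \<in> ladder_exit y m" for n m \<omega>
  proof -
    have "y + \<delta> \<le> walk A B (Suc n) \<omega>"
      using that(2) by (auto simp: ladder_exit_def walk_Suc)
    also have "\<dots> \<le> walk A B m \<omega>"
      using that(1,3) by (cases "Suc n = m") (auto simp: ladder_exit_def ladder_epoch_def less_imp_le)
    finally show False using that(3) by (auto simp: ladder_exit_def)
  qed
  then show ?thesis
    unfolding disjoint_family_on_def by (auto simp: disjoint_iff) (metis linorder_neqE_nat)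
qed

lemma suminf_emeasure_ladder_in_le: "(\<Sum>n. emeasure M (ladder_in y n)) \<le> ennreal (1 / \<gamma>)"
proof -
  let ?G = "{\<omega>\<in>space M. \<delta> \<le> B 0 \<omega> - A 0 \<omega>}"
  have "(\<Sum>n. emeasure M (ladder_in y n)) * ennreal \<gamma> \<le> (\<Sum>n. emeasure M (ladder_in y n)) * emeasure M ?G"
    using jump \<gamma>_pos by (intro mult_left_mono) (auto simp: emeasure_eq_measure)
  also have "\<dots> = (\<Sum>n. emeasure M (ladder_exit y n))"
    by (simp add: emeasure_ladder_exit)
  also have "\<dots> = emeasure M (\<Union>n. ladder_exit y n)"
    by (rule suminf_emeasure) (auto simp: disjoint_family_ladder_exit)
  also have "\<dots> \<le> 1" by (rule emeasure_le_1)
  finally have le1: "(\<Sum>n. emeasure M (ladder_in y n)) * ennreal \<gamma> \<le> 1" .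
  have "(\<Sum>n. emeasure M (ladder_in y n)) = (\<Sum>n. emeasure M (ladder_in y n)) * ennreal \<gamma> * ennreal (1 / \<gamma>)"
    using \<gamma>_pos by (simp add: mult.assoc ennreal_mult[symmetric])
  also have "\<dots> \<le> 1 * ennreal (1 / \<gamma>)" by (intro mult_right_mono le1) simp
  finally show ?thesis by simp
qed

definition band :: "nat \<Rightarrow> real set" where
  "band k = {real k * \<delta> ..< real k * \<delta> + \<delta>}"

definition tail_part :: "nat \<Rightarrow> real \<Rightarrow> ennreal" where
  "tail_part k a = (if real k * \<delta> < a then ennreal a else 0)"

lemma band_sets[measurable]: "band k \<in> sets borel"
  unfolding band_def by simp

lemma tail_part_measurable[measurable]: "tail_part k \<in> borel_measurable borel"
  unfolding tail_part_def by measurable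

text \<open>If the busy period ends with job n, the walk before it lies in some band k \<ge> 0,
  so the interarrival time A n exceeds k\<delta> and bounds the idle time.\<close>
lemma idle_time_le_band_sum:
  assumes \<omega>: "\<omega> \<in> space M"
  shows "ennreal (I \<omega>) \<le> (\<Sum>k. \<Sum>n. indicator {\<omega>\<in>space M. stays_positive A B n \<omega> \<and> walk A B n \<omega> \<in> band k} \<omega>
                                    * tail_part k (A n \<omega>))"
    (is "_ \<le> (\<Sum>k. \<Sum>n. ?t k n)")
proof (cases "N \<omega>")
  case (enat m)
  define n where "n = m - 1"
  have m: "m = Suc n" using busy_jobs_enatD(1)[OF enat] by (simp add: n_def)
  have pos: "stays_positive A B n \<omega>" using less_busy_jobs_iff[of n A B \<omega>] enat m by simp
  have end_le: "walk A B n \<omega> + (B n \<omega> - A n \<omega>) \<le> 0"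
    using busy_jobs_enatD(2)[OF enat] by (simp add: m walk_Suc)
  have nonneg: "0 \<le> walk A B n \<omega>" using stays_positive_walk_nonneg[OF pos] .
  have B_pos': "0 < B n \<omega>" using B_pos \<omega> by simp
  define k where "k = nat \<lfloor>walk A B n \<omega> / \<delta>\<rfloor>"
  have kb: "real k * \<delta> \<le> walk A B n \<omega>" "walk A B n \<omega> < real k * \<delta> + \<delta>"
    using nat_floor_divide_bounds[OF nonneg \<delta>_pos] by (simp_all add: k_def)
  have "I \<omega> \<le> A n \<omega>" using idle_time_enat[OF enat] end_le nonneg B_pos' by (simp add: m walk_Suc)
  moreover have "?t k n = ennreal (A n \<omega>)"
    using pos kb \<omega> end_le B_pos' by (auto simp: tail_part_def band_def indicator_def)
  ultimately have "ennreal (I \<omega>) \<le> ?t k n" by (simp add: ennreal_leI)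
  also have "\<dots> \<le> (\<Sum>n. ?t k n)" by (rule ennreal_le_suminf)
  also have "\<dots> \<le> (\<Sum>k. \<Sum>n. ?t k n)" by (rule ennreal_le_suminf[where f = "\<lambda>k. \<Sum>n. ?t k n"])
  finally show ?thesis .
qed (simp add: idle_time_infinity)

lemma nn_integral_band_term:
  "(\<integral>\<^sup>+\<omega>. indicator {\<omega>\<in>space M. stays_positive A B n \<omega> \<and> walk A B n \<omega> \<in> band k} \<omega> * tail_part k (A n \<omega>) \<partial>M)
     = emeasure M {\<omega>\<in>space M. stays_positive A B n \<omega> \<and> walk A B n \<omega> \<in> band k}
       * (\<integral>\<^sup>+\<omega>. tail_part k (A 0 \<omega>) \<partial>M)"
proof -
  define Q where "Q v \<longleftrightarrow> (\<forall>j\<in>{1..n}. 0 < history_walk v j) \<and> history_walk v n \<in> band k" for v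
  have [measurable]: "Measurable.pred (history_space n) Q" unfolding Q_def by measurable
  have "{\<omega>\<in>space M. stays_positive A B n \<omega> \<and> walk A B n \<omega> \<in> band k} = {\<omega>\<in>space M. Q (history n \<omega>)}"
    by (auto simp: Q_def stays_positive_history history_walk_history)
  then show ?thesis
    using nn_integral_history_event_job[where Q = Q and g = "\<lambda>p. tail_part k (fst p)"] by (simp add: job_def)
qed

lemma suminf_tail_part_le:
  assumes a: "0 < a"
  shows "(\<Sum>k. tail_part k a) \<le> ennreal (a * a / \<delta> + a)"
proof -
  define K where "K = nat \<lceil>a / \<delta>\<rceil>"
  have "0 < a / \<delta>" using a \<delta>_pos by simp
  then have K: "a / \<delta> \<le> real K" "real K \<le> a / \<delta> + 1"
    unfolding K_def by (simp_all add: of_nat_ceiling)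
  have "tail_part k a = 0" if "k \<notin> {..<K}" for k
  proof -
    have "a / \<delta> \<le> real k" using K(1) that by simp
    then show ?thesis using \<delta>_pos by (simp add: tail_part_def divide_le_eq)
  qed
  then have "(\<Sum>k. tail_part k a) = (\<Sum>k<K. tail_part k a)" by (intro suminf_finite) auto
  also have "\<dots> \<le> (\<Sum>k<K. ennreal a)" by (intro sum_mono) (simp add: tail_part_def)
  also have "\<dots> = ennreal (real K * a)" using a by (simp add: ennreal_mult ennreal_of_nat_eq_real_of_nat)
  also have "\<dots> \<le> ennreal (a * a / \<delta> + a)"
    using mult_right_mono[OF K(2), of a] a by (intro ennreal_leI) (simp add: algebra_simps)
  finally show ?thesis .
qed

lemma suminf_nn_integral_tail_part_le:
  "(\<Sum>k. \<integral>\<^sup>+\<omega>. tail_part k (A 0 \<omega>) \<partial>M) \<le> ennreal (expectation (\<lambda>\<omega>. (A 0 \<omega>)\<^sup>2) / \<delta> + expectation (A 0))"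
proof -
  have nonneg: "AE \<omega> in M. 0 \<le> (A 0 \<omega>)\<^sup>2 / \<delta> + A 0 \<omega>"
    using A_pos \<delta>_pos by (intro AE_I2 add_nonneg_nonneg) (auto intro: less_imp_le)
  have "(\<Sum>k. \<integral>\<^sup>+\<omega>. tail_part k (A 0 \<omega>) \<partial>M) = (\<integral>\<^sup>+\<omega>. (\<Sum>k. tail_part k (A 0 \<omega>)) \<partial>M)"
    by (rule nn_integral_suminf[symmetric]) simp
  also have "\<dots> \<le> (\<integral>\<^sup>+\<omega>. ennreal ((A 0 \<omega>)\<^sup>2 / \<delta> + A 0 \<omega>) \<partial>M)"
    by (intro nn_integral_mono) (use suminf_tail_part_le A_pos in \<open>auto simp: power2_eq_square\<close>)
  also have "\<dots> = ennreal (\<integral>\<omega>. (A 0 \<omega>)\<^sup>2 / \<delta> + A 0 \<omega> \<partial>M)"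
    using A_sq_int A_int nonneg by (intro nn_integral_eq_integral) auto
  also have "(\<integral>\<omega>. (A 0 \<omega>)\<^sup>2 / \<delta> + A 0 \<omega> \<partial>M) = expectation (\<lambda>\<omega>. (A 0 \<omega>)\<^sup>2) / \<delta> + expectation (A 0)"
    using A_sq_int A_int by simp
  finally show ?thesis .
qed

lemma idle_time_upper:
  "(\<integral>\<^sup>+\<omega>. ennreal (I \<omega>) \<partial>M)
     \<le> ennreal (1 / \<gamma>) * ennreal (expectation (\<lambda>\<omega>. (A 0 \<omega>)\<^sup>2) / \<delta> + expectation (A 0))"
proof -
  let ?E = "\<lambda>k n. {\<omega>\<in>space M. stays_positive A B n \<omega> \<and> walk A B n \<omega> \<in> band k}"
  let ?H = "\<lambda>k. \<integral>\<^sup>+\<omega>. tail_part k (A 0 \<omega>) \<partial>M"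
  have "(\<integral>\<^sup>+\<omega>. ennreal (I \<omega>) \<partial>M) \<le> (\<integral>\<^sup>+\<omega>. (\<Sum>k. \<Sum>n. indicator (?E k n) \<omega> * tail_part k (A n \<omega>)) \<partial>M)"
    by (intro nn_integral_mono idle_time_le_band_sum)
  also have "\<dots> = (\<Sum>k. \<Sum>n. \<integral>\<^sup>+\<omega>. indicator (?E k n) \<omega> * tail_part k (A n \<omega>) \<partial>M)"
    by (simp add: nn_integral_suminf)
  also have "\<dots> = (\<Sum>k. (\<Sum>n. emeasure M (ladder_in (real k * \<delta>) n)) * ?H k)"
    by (simp only: nn_integral_band_term emeasure_stays_positive_eq_ladder_epoch[OF band_sets])
      (simp add: ladder_in_def band_def)
  also have "\<dots> \<le> (\<Sum>k. ennreal (1 / \<gamma>) * ?H k)"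
    by (intro suminf_le mult_right_mono suminf_emeasure_ladder_in_le) auto
  also have "\<dots> \<le> ennreal (1 / \<gamma>) * ennreal (expectation (\<lambda>\<omega>. (A 0 \<omega>)\<^sup>2) / \<delta> + expectation (A 0))"
    by (simp add: mult_left_mono suminf_nn_integral_tail_part_le)
  finally show ?thesis .
qed

lemma idle_time_ge_first_gap: "\<omega> \<in> space M \<Longrightarrow> max (A 0 \<omega> - B 0 \<omega>) 0 \<le> I \<omega>"
proof (cases "B 0 \<omega> \<le> A 0 \<omega>")
  case True
  then have walk_1: "walk A B 1 \<omega> \<le> 0" by (simp add: walk_def)
  then have "(LEAST m. m \<ge> 1 \<and> walk A B m \<omega> \<le> 0) = 1"
    by (intro Least_equality) auto
  then have "N \<omega> = enat 1"
    using walk_1 by (auto simp: busy_jobs_def)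
  then show ?thesis using True by (simp add: idle_time_enat walk_def)
qed (use idle_time_nonneg in auto)

text \<open>With x+ = max x 0: E (A - B) + E (B - A)+ = E (A - B)+, and the first term is positive.\<close>
lemma idle_time_lower: "ennreal (\<delta> * \<gamma>) \<le> (\<integral>\<^sup>+\<omega>. ennreal (I \<omega>) \<partial>M)"
proof -
  let ?G = "{\<omega>\<in>space M. \<delta> \<le> B 0 \<omega> - A 0 \<omega>}"
  have int: "integrable M (\<lambda>\<omega>. A 0 \<omega> - B 0 \<omega>)" "integrable M (\<lambda>\<omega>. max (B 0 \<omega> - A 0 \<omega>) 0)"
    "integrable M (\<lambda>\<omega>. max (A 0 \<omega> - B 0 \<omega>) 0)" "integrable M (\<lambda>\<omega>. \<delta> * indicator ?G \<omega>)"
    using A_int B_int by (auto intro!: integrable_real_indicator simp: emeasure_eq_measure)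
  have "\<delta> * \<gamma> \<le> \<delta> * measure M ?G" using jump \<delta>_pos by simp
  also have "\<dots> = (\<integral>\<omega>. \<delta> * indicator ?G \<omega> \<partial>M)" by simp
  also have "\<dots> \<le> (\<integral>\<omega>. max (B 0 \<omega> - A 0 \<omega>) 0 \<partial>M)"
    using int by (intro integral_mono) (auto simp: indicator_def)
  also have "\<dots> < (\<integral>\<omega>. A 0 \<omega> - B 0 \<omega> \<partial>M) + (\<integral>\<omega>. max (B 0 \<omega> - A 0 \<omega>) 0 \<partial>M)"
    using drift A_int B_int by simp
  also have "\<dots> = (\<integral>\<omega>. max (A 0 \<omega> - B 0 \<omega>) 0 \<partial>M)"
    by (subst Bochner_Integration.integral_add[symmetric, OF int(1,2)])
      (auto intro!: Bochner_Integration.integral_cong simp: max_def)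
  finally have "ennreal (\<delta> * \<gamma>) \<le> ennreal (\<integral>\<omega>. max (A 0 \<omega> - B 0 \<omega>) 0 \<partial>M)"
    by (intro ennreal_leI) simp
  also have "\<dots> = (\<integral>\<^sup>+\<omega>. ennreal (max (A 0 \<omega> - B 0 \<omega>) 0) \<partial>M)"
    by (rule nn_integral_eq_integral[symmetric, OF int(3)]) auto
  also have "\<dots> \<le> (\<integral>\<^sup>+\<omega>. ennreal (I \<omega>) \<partial>M)"
    by (intro nn_integral_mono ennreal_leI idle_time_ge_first_gap)
  finally show ?thesis .
qed

lemma expectation_B_nonneg: "0 \<le> expectation (B 0)"
  using B_pos by (intro integral_nonneg_AE AE_I2) (auto intro: less_imp_le)

lemma expectation_A_pos: "0 < expectation (A 0)"
  using expectation_B_nonneg drift by linarith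

lemma nn_integral_A: "(\<integral>\<^sup>+\<omega>. ennreal (A 0 \<omega>) \<partial>M) = ennreal (expectation (A 0))"
  using A_int A_pos by (intro nn_integral_eq_integral) (auto intro!: AE_I2 less_imp_le)

lemma nn_integral_B: "(\<integral>\<^sup>+\<omega>. ennreal (B 0 \<omega>) \<partial>M) = ennreal (expectation (B 0))"
  using B_int B_pos by (intro nn_integral_eq_integral) (auto intro!: AE_I2 less_imp_le)

text \<open>The event that job i is served in the busy period, i.e. N > i.\<close>
abbreviation served :: "nat \<Rightarrow> 'a set" where
  "served i \<equiv> {\<omega>\<in>space M. stays_positive A B i \<omega>}"

lemma indicator_served_mult:
  fixes x :: "'b::semiring_1"
  assumes "\<omega> \<in> space M" "N \<omega> = enat K"
  shows "indicator (served i) \<omega> * x = (if i < K then x else 0)"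
  using assms less_busy_jobs_iff[of i A B \<omega>] by (simp add: indicator_def)

lemma busy_jobs_eq_suminf_served:
  assumes \<omega>: "\<omega> \<in> space M"
  shows "ennreal_of_enat (N \<omega>) = (\<Sum>i. indicator (served i) \<omega>)"
proof (cases "N \<omega>")
  case (enat K)
  then have "(\<Sum>i. indicator (served i) \<omega> :: ennreal) = (\<Sum>i<K. 1)"
    using less_busy_jobs_iff[of _ A B \<omega>] \<omega> by (subst suminf_finite[of "{..<K}"]) auto
  then show ?thesis using enat by simp
next
  case infinity
  then have "(\<Sum>i. indicator (served i) \<omega> :: ennreal) = (\<Sum>i. ennreal 1)"
    using less_busy_jobs_iff[of _ A B \<omega>] \<omega> by simp
  also have "\<dots> = top"
    by (rule summable_iff_suminf_neq_top) (auto simp: summable_const_iff)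
  finally show ?thesis using infinity by simp
qed

lemma nn_integral_busy_jobs: "(\<integral>\<^sup>+\<omega>. ennreal_of_enat (N \<omega>) \<partial>M) = (\<Sum>i. emeasure M (served i))"
  by (simp add: nn_integral_cong[OF busy_jobs_eq_suminf_served] nn_integral_suminf)

text \<open>Whether job i is served depends only on the jobs before it (N is a stopping time).\<close>
lemma nn_integral_served_job:
  assumes [measurable]: "g \<in> borel_measurable job_space"
  shows "(\<integral>\<^sup>+\<omega>. indicator (served i) \<omega> * g (job i \<omega>) \<partial>M) = emeasure M (served i) * (\<integral>\<^sup>+\<omega>. g (job 0 \<omega>) \<partial>M)"
proof -
  define Q where "Q v \<longleftrightarrow> (\<forall>k\<in>{1..i}. 0 < history_walk v k)" for v
  have [measurable]: "Measurable.pred (history_space i) Q" unfolding Q_def by measurable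
  have "served i = {\<omega>\<in>space M. Q (history i \<omega>)}"
    by (simp add: Q_def stays_positive_history)
  then show ?thesis by (simp add: nn_integral_history_event_job)
qed

lemma nn_integral_served_A:
  "(\<integral>\<^sup>+\<omega>. indicator (served i) \<omega> * ennreal (A i \<omega>) \<partial>M) = emeasure M (served i) * ennreal (expectation (A 0))"
  using nn_integral_served_job[of "\<lambda>p. ennreal (fst p)" i] by (simp add: job_def nn_integral_A)

lemma nn_integral_served_B:
  "(\<integral>\<^sup>+\<omega>. indicator (served i) \<omega> * ennreal (B i \<omega>) \<partial>M) = emeasure M (served i) * ennreal (expectation (B 0))"
  using nn_integral_served_job[of "\<lambda>p. ennreal (snd p)" i] by (simp add: job_def nn_integral_B)

lemma sum_served_le_idle_time:
  assumes \<omega>: "\<omega> \<in> space M"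
  shows "(\<Sum>i<m. indicator (served i) \<omega> * (A i \<omega> - B i \<omega>)) \<le> I \<omega>"
proof (cases "N \<omega> \<le> enat m")
  case True
  then obtain K where K: "N \<omega> = enat K" "K \<le> m" by (cases "N \<omega>") auto
  have "(\<Sum>i<m. indicator (served i) \<omega> * (A i \<omega> - B i \<omega>)) = (\<Sum>i<m. if i < K then A i \<omega> - B i \<omega> else 0)"
    by (intro sum.cong refl indicator_served_mult[OF \<omega> K(1)])
  also have "\<dots> = (\<Sum>i<K. A i \<omega> - B i \<omega>)"
    using K(2) by (intro sum.mono_neutral_cong_right) auto
  also have "\<dots> = I \<omega>" using idle_time_eq_sum[OF K(1)] by simp
  finally show ?thesis by simp
next
  case False
  then have "stays_positive A B i \<omega>" if "i \<le> m" for i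
    using less_busy_jobs_iff[of i A B \<omega>] that by (meson enat_ord_simps(1) le_less_trans not_le)
  then have "(\<Sum>i<m. indicator (served i) \<omega> * (A i \<omega> - B i \<omega>)) = - walk A B m \<omega>"
    using \<omega> by (simp add: walk_def sum_negf[symmetric])
  also have "\<dots> \<le> 0"
    using stays_positive_walk_nonneg[of A B m \<omega>] \<open>\<And>i. i \<le> m \<Longrightarrow> _\<close> by simp
  also have "\<dots> \<le> I \<omega>" by (rule idle_time_nonneg)
  finally show ?thesis .
qed

lemma sum_served_A_le:
  assumes \<omega>: "\<omega> \<in> space M"
  shows "(\<Sum>i<m. indicator (served i) \<omega> * ennreal (A i \<omega>))
       \<le> ennreal (I \<omega>) + (\<Sum>i<m. indicator (served i) \<omega> * ennreal (B i \<omega>))"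
proof -
  have nonneg: "0 \<le> A i \<omega>" "0 \<le> B i \<omega>" for i using A_pos B_pos \<omega> by (auto intro: less_imp_le)
  have ennreal_sum: "(\<Sum>i<m. indicator (served i) \<omega> * ennreal (f i)) = ennreal (\<Sum>i<m. indicator (served i) \<omega> * f i)"
    if "\<And>i. 0 \<le> f i" for f
    using that by (subst sum_ennreal[symmetric]) (auto simp: indicator_def)
  have "(\<Sum>i<m. indicator (served i) \<omega> * A i \<omega>) \<le> I \<omega> + (\<Sum>i<m. indicator (served i) \<omega> * B i \<omega>)"
    using sum_served_le_idle_time[OF \<omega>, of m] by (simp add: right_diff_distrib sum_subtractf)
  then show ?thesis
    using idle_time_nonneg[of A B \<omega>] nonneg
    by (simp add: ennreal_sum ennreal_plus[symmetric] sum_nonneg ennreal_leI del: ennreal_plus)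
qed

lemma sum_served_drift_le:
  "ennreal (expectation (A 0) - expectation (B 0)) * (\<Sum>i<m. emeasure M (served i)) \<le> (\<integral>\<^sup>+\<omega>. ennreal (I \<omega>) \<partial>M)"
proof -
  define x where "x = (\<Sum>i<m. measure M (served i))"
  have x: "(\<Sum>i<m. emeasure M (served i)) = ennreal x" "0 \<le> x"
    unfolding x_def by (simp_all add: emeasure_eq_measure sum_nonneg)
  have "ennreal (x * expectation (A 0)) = (\<Sum>i<m. emeasure M (served i) * ennreal (expectation (A 0)))"
    using x(2) expectation_A_pos by (simp add: ennreal_mult sum_distrib_right flip: x(1))
  also have "\<dots> = (\<integral>\<^sup>+\<omega>. (\<Sum>i<m. indicator (served i) \<omega> * ennreal (A i \<omega>)) \<partial>M)"
    by (subst nn_integral_sum) (auto simp: nn_integral_served_A)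
  also have "\<dots> \<le> (\<integral>\<^sup>+\<omega>. ennreal (I \<omega>) + (\<Sum>i<m. indicator (served i) \<omega> * ennreal (B i \<omega>)) \<partial>M)"
    by (intro nn_integral_mono sum_served_A_le)
  also have "\<dots> = (\<integral>\<^sup>+\<omega>. ennreal (I \<omega>) \<partial>M) + (\<integral>\<^sup>+\<omega>. (\<Sum>i<m. indicator (served i) \<omega> * ennreal (B i \<omega>)) \<partial>M)"
    by (rule nn_integral_add) measurable
  also have "(\<integral>\<^sup>+\<omega>. (\<Sum>i<m. indicator (served i) \<omega> * ennreal (B i \<omega>)) \<partial>M)
      = (\<Sum>i<m. emeasure M (served i) * ennreal (expectation (B 0)))"
    by (subst nn_integral_sum) (auto simp: nn_integral_served_B)
  also have "(\<Sum>i<m. emeasure M (served i) * ennreal (expectation (B 0))) = ennreal (x * expectation (B 0))"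
    using x(2) expectation_B_nonneg by (simp add: ennreal_mult sum_distrib_right flip: x(1))
  finally have "ennreal (x * expectation (A 0)) - ennreal (x * expectation (B 0)) \<le> (\<integral>\<^sup>+\<omega>. ennreal (I \<omega>) \<partial>M)"
    by (simp add: ennreal_minus_le_iff add.commute)
  then show ?thesis
    using x expectation_B_nonneg drift by (simp add: ennreal_minus ennreal_mult[symmetric] algebra_simps)
qed

lemma busy_jobs_drift_le:
  "ennreal (expectation (A 0) - expectation (B 0)) * (\<integral>\<^sup>+\<omega>. ennreal_of_enat (N \<omega>) \<partial>M) \<le> (\<integral>\<^sup>+\<omega>. ennreal (I \<omega>) \<partial>M)"
  unfolding nn_integral_busy_jobs ennreal_suminf_cmult[symmetric]
  by (rule suminf_le_const) (auto simp: summableI sum_distrib_left[symmetric] sum_served_drift_le)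

lemma nn_integral_busy_jobs_finite: "(\<integral>\<^sup>+\<omega>. ennreal_of_enat (N \<omega>) \<partial>M) \<noteq> \<infinity>"
proof
  assume "(\<integral>\<^sup>+\<omega>. ennreal_of_enat (N \<omega>) \<partial>M) = \<infinity>"
  then have "(\<integral>\<^sup>+\<omega>. ennreal (I \<omega>) \<partial>M) = \<infinity>"
    using busy_jobs_drift_le drift by (simp add: ennreal_mult_eq_top_iff top_unique)
  then show False
    using idle_time_upper by (simp add: ennreal_mult_eq_top_iff top_unique)
qed

lemma idle_time_plus_sum_served_B:
  assumes \<omega>: "\<omega> \<in> space M" and K: "N \<omega> = enat K"
  shows "ennreal (I \<omega>) + (\<Sum>i. indicator (served i) \<omega> * ennreal (B i \<omega>))
       = (\<Sum>i. indicator (served i) \<omega> * ennreal (A i \<omega>))"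
proof -
  have nonneg: "0 \<le> A i \<omega>" "0 \<le> B i \<omega>" for i using A_pos B_pos \<omega> by (auto intro: less_imp_le)
  have served_sum: "(\<Sum>i. indicator (served i) \<omega> * ennreal (f i)) = ennreal (\<Sum>i<K. f i)"
    if "\<And>i. 0 \<le> f i" for f
    using that by (simp add: indicator_served_mult[OF \<omega> K]) (subst suminf_finite[of "{..<K}"], auto)
  have "ennreal (I \<omega>) + ennreal (\<Sum>i<K. B i \<omega>) = ennreal (I \<omega> + (\<Sum>i<K. B i \<omega>))"
    using idle_time_nonneg[of A B \<omega>] nonneg by (simp add: ennreal_plus sum_nonneg)
  also have "I \<omega> + (\<Sum>i<K. B i \<omega>) = (\<Sum>i<K. A i \<omega>)"
    by (simp add: idle_time_eq_sum[OF K] sum_subtractf)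
  finally show ?thesis using nonneg by (simp add: served_sum)
qed

lemma nn_integral_suminf_served_A:
  "(\<integral>\<^sup>+\<omega>. (\<Sum>i. indicator (served i) \<omega> * ennreal (A i \<omega>)) \<partial>M)
     = (\<integral>\<^sup>+\<omega>. ennreal_of_enat (N \<omega>) \<partial>M) * ennreal (expectation (A 0))"
  by (subst nn_integral_suminf) (simp_all add: nn_integral_served_A nn_integral_busy_jobs)

lemma nn_integral_suminf_served_B:
  "(\<integral>\<^sup>+\<omega>. (\<Sum>i. indicator (served i) \<omega> * ennreal (B i \<omega>)) \<partial>M)
     = (\<integral>\<^sup>+\<omega>. ennreal_of_enat (N \<omega>) \<partial>M) * ennreal (expectation (B 0))"
  by (subst nn_integral_suminf) (simp_all add: nn_integral_served_B nn_integral_busy_jobs)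

lemma wald_idle_time:
  "(\<integral>\<^sup>+\<omega>. ennreal (I \<omega>) \<partial>M) = ennreal (expectation (A 0) - expectation (B 0)) * (\<integral>\<^sup>+\<omega>. ennreal_of_enat (N \<omega>) \<partial>M)"
proof -
  let ?EN = "\<integral>\<^sup>+\<omega>. ennreal_of_enat (N \<omega>) \<partial>M"
  obtain e where e: "?EN = ennreal e" "0 \<le> e"
    using nn_integral_busy_jobs_finite by (cases ?EN) auto
  have "AE \<omega> in M. ennreal_of_enat (N \<omega>) \<noteq> \<infinity>"
    by (rule nn_integral_PInf_AE[OF _ nn_integral_busy_jobs_finite]) simp
  then have AE_eq: "AE \<omega> in M. ennreal (I \<omega>) + (\<Sum>i. indicator (served i) \<omega> * ennreal (B i \<omega>))
                               = (\<Sum>i. indicator (served i) \<omega> * ennreal (A i \<omega>))"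
  proof (rule AE_mp, intro AE_I2 impI)
    fix \<omega> assume \<omega>: "\<omega> \<in> space M" and "ennreal_of_enat (N \<omega>) \<noteq> \<infinity>"
    then obtain K where "N \<omega> = enat K" by (cases "N \<omega>") auto
    then show "ennreal (I \<omega>) + (\<Sum>i. indicator (served i) \<omega> * ennreal (B i \<omega>))
             = (\<Sum>i. indicator (served i) \<omega> * ennreal (A i \<omega>))"
      by (rule idle_time_plus_sum_served_B[OF \<omega>])
  qed
  have "(\<integral>\<^sup>+\<omega>. ennreal (I \<omega>) \<partial>M) + ?EN * ennreal (expectation (B 0))
      = (\<integral>\<^sup>+\<omega>. ennreal (I \<omega>) + (\<Sum>i. indicator (served i) \<omega> * ennreal (B i \<omega>)) \<partial>M)"
    by (subst nn_integral_add) (auto simp: nn_integral_suminf_served_B)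
  also have "\<dots> = ?EN * ennreal (expectation (A 0))"
    by (simp add: nn_integral_cong_AE[OF AE_eq] nn_integral_suminf_served_A)
  finally have "(\<integral>\<^sup>+\<omega>. ennreal (I \<omega>) \<partial>M) + ennreal (e * expectation (B 0)) = ennreal (e * expectation (A 0))"
    using e expectation_A_pos expectation_B_nonneg by (simp add: ennreal_mult)
  then have "(\<integral>\<^sup>+\<omega>. ennreal (I \<omega>) \<partial>M) = ennreal (e * expectation (A 0)) - ennreal (e * expectation (B 0))"
    by (metis ennreal_add_diff_cancel_right ennreal_neq_top)
  then show ?thesis
    using e expectation_B_nonneg drift by (simp add: ennreal_minus ennreal_mult[symmetric] algebra_simps)
qed

lemma scaled_busy_jobs_eq:
  "ennreal (1 - expectation (B 0) / expectation (A 0)) * (\<integral>\<^sup>+\<omega>. ennreal_of_enat (N \<omega>) \<partial>M)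
     = ennreal (1 / expectation (A 0)) * (\<integral>\<^sup>+\<omega>. ennreal (I \<omega>) \<partial>M)"
proof -
  have "ennreal (1 - expectation (B 0) / expectation (A 0))
      = ennreal (1 / expectation (A 0)) * ennreal (expectation (A 0) - expectation (B 0))"
    using expectation_A_pos drift by (simp add: ennreal_mult[symmetric] field_simps)
  then show ?thesis by (simp add: wald_idle_time mult.assoc)
qed

lemma idle_time_le_of_second_moment:
  assumes "expectation (\<lambda>\<omega>. (A 0 \<omega>)\<^sup>2) \<le> r"
  shows "(\<integral>\<^sup>+\<omega>. ennreal (I \<omega>) \<partial>M) \<le> ennreal ((r / \<delta> + (1 + r)) / \<gamma>)"
proof -
  have "expectation (A 0) \<le> 1 + r"
    using expectation_le_one_plus_second_moment[OF A_int A_sq_int] assms by linarith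
  then have "expectation (\<lambda>\<omega>. (A 0 \<omega>)\<^sup>2) / \<delta> + expectation (A 0) \<le> r / \<delta> + (1 + r)"
    using assms \<delta>_pos by (simp add: add_mono divide_right_mono)
  then have "ennreal (1 / \<gamma>) * ennreal (expectation (\<lambda>\<omega>. (A 0 \<omega>)\<^sup>2) / \<delta> + expectation (A 0))
           \<le> ennreal ((r / \<delta> + (1 + r)) / \<gamma>)"
    using \<gamma>_pos by (simp add: ennreal_mult'[symmetric] ennreal_leI divide_right_mono)
  with idle_time_upper show ?thesis by (rule order.trans)
qed

lemma scaled_busy_jobs_bounds:
  assumes r: "expectation (\<lambda>\<omega>. (A 0 \<omega>)\<^sup>2) \<le> r" and a: "0 < a" "a \<le> expectation (A 0)"
  shows "ennreal (\<delta> * \<gamma> / (1 + r))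
           \<le> ennreal (1 - expectation (B 0) / expectation (A 0)) * (\<integral>\<^sup>+\<omega>. ennreal_of_enat (N \<omega>) \<partial>M)"
    and "ennreal (1 - expectation (B 0) / expectation (A 0)) * (\<integral>\<^sup>+\<omega>. ennreal_of_enat (N \<omega>) \<partial>M)
           \<le> ennreal ((r / \<delta> + (1 + r)) / \<gamma> / a)"
proof -
  have EA: "expectation (A 0) \<le> 1 + r"
    using expectation_le_one_plus_second_moment[OF A_int A_sq_int] r by linarith
  have "ennreal (\<delta> * \<gamma> / (1 + r)) = ennreal (1 / (1 + r)) * ennreal (\<delta> * \<gamma>)"
    using EA expectation_A_pos \<delta>_pos \<gamma>_pos by (simp add: ennreal_mult[symmetric])
  also have "\<dots> \<le> ennreal (1 / expectation (A 0)) * (\<integral>\<^sup>+\<omega>. ennreal (I \<omega>) \<partial>M)"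
    using EA expectation_A_pos by (intro mult_mono ennreal_leI idle_time_lower divide_left_mono) auto
  finally show "ennreal (\<delta> * \<gamma> / (1 + r)) \<le> ennreal (1 - expectation (B 0) / expectation (A 0)) * (\<integral>\<^sup>+\<omega>. ennreal_of_enat (N \<omega>) \<partial>M)"
    by (simp add: scaled_busy_jobs_eq)
  have "ennreal (1 / expectation (A 0)) * (\<integral>\<^sup>+\<omega>. ennreal (I \<omega>) \<partial>M)
      \<le> ennreal (1 / a) * ennreal ((r / \<delta> + (1 + r)) / \<gamma>)"
    using a by (intro mult_mono ennreal_leI idle_time_le_of_second_moment[OF r] divide_left_mono) auto
  also have "\<dots> = ennreal ((r / \<delta> + (1 + r)) / \<gamma> / a)"
    using a by (simp add: ennreal_mult'[symmetric] mult.commute)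
  finally show "ennreal (1 - expectation (B 0) / expectation (A 0)) * (\<integral>\<^sup>+\<omega>. ennreal_of_enat (N \<omega>) \<partial>M)
      \<le> ennreal ((r / \<delta> + (1 + r)) / \<gamma> / a)"
    by (simp add: scaled_busy_jobs_eq)
qed

end

theorem lemma1:
  fixes M :: "nat \<Rightarrow> 'a measure"
    and A B :: "nat \<Rightarrow> nat \<Rightarrow> 'a \<Rightarrow> real"
    and \<rho> :: "nat \<Rightarrow> real"
    and \<rho>0 A_min \<delta> \<gamma> :: real
  assumes prob: "\<And>n. prob_space (M n)"
    and indep: "\<And>n. prob_space.indep_vars (M n) (\<lambda>_. borel)
                   (\<lambda>k. case k of Inl i \<Rightarrow> A n i | Inr i \<Rightarrow> B n i) (UNIV :: (nat + nat) set)"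
    and A_id: "\<And>n i. distr (M n) borel (A n i) = distr (M n) borel (A n 0)"
    and B_id: "\<And>n i. distr (M n) borel (B n i) = distr (M n) borel (B n 0)"
    and A_pos: "\<And>n i \<omega>. \<omega> \<in> space (M n) \<Longrightarrow> A n i \<omega> > 0"
    and B_pos: "\<And>n i \<omega>. \<omega> \<in> space (M n) \<Longrightarrow> B n i \<omega> > 0"
    and A_int: "\<And>n. integrable (M n) (A n 0)"
    and B_int: "\<And>n. integrable (M n) (B n 0)"
    and rho_def: "\<And>n. \<rho> n = prob_space.expectation (M n) (B n 0) / prob_space.expectation (M n) (A n 0)"
    and rho0: "0 < \<rho>0" "\<rho>0 < 1"
    and Amin: "A_min > 0"
    and bounds: "\<And>n. \<rho>0 * A_min \<le> \<rho>0 * prob_space.expectation (M n) (A n 0)"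
                "\<And>n. \<rho>0 * prob_space.expectation (M n) (A n 0) \<le> prob_space.expectation (M n) (B n 0)"
                "\<And>n. prob_space.expectation (M n) (B n 0) < prob_space.expectation (M n) (A n 0)"
    and rho_lim: "\<rho> \<longlonglongrightarrow> 1"
    and A_var: "\<And>n. integrable (M n) (\<lambda>\<omega>. (A n 0 \<omega>)\<^sup>2)"
    and A_sq_bdd: "limsup (\<lambda>n. ereal (prob_space.expectation (M n) (\<lambda>\<omega>. (A n 0 \<omega>)\<^sup>2))) < \<infinity>"
    and \<delta>\<gamma>: "\<delta> > 0" "\<gamma> > 0"
    and jump: "\<And>n. prob_space.prob (M n) {\<omega> \<in> space (M n). B n 0 \<omega> - A n 0 \<omega> \<ge> \<delta>} \<ge> \<gamma>"
  shows "(\<exists>c C. 0 < c \<and> c \<le> C \<and> (\<forall>\<^sub>F n in sequentially.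
             ennreal c \<le> ennreal (1 - \<rho> n) * (\<integral>\<^sup>+ \<omega>. ennreal_of_enat (busy_jobs (A n) (B n) \<omega>) \<partial>M n)
           \<and> ennreal (1 - \<rho> n) * (\<integral>\<^sup>+ \<omega>. ennreal_of_enat (busy_jobs (A n) (B n) \<omega>) \<partial>M n) \<le> ennreal C))
    \<and> (\<exists>c C. 0 < c \<and> c \<le> C \<and> (\<forall>\<^sub>F n in sequentially.
             ennreal c \<le> (\<integral>\<^sup>+ \<omega>. ennreal (idle_time (A n) (B n) \<omega>) \<partial>M n)
           \<and> (\<integral>\<^sup>+ \<omega>. ennreal (idle_time (A n) (B n) \<omega>) \<partial>M n) \<le> ennreal C))"
proof -
  have queue: "gg1_queue (M n) (A n) (B n) \<delta> \<gamma>" for n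
  proof (intro gg1_queue.intro gg1_queue_axioms.intro)
    show "prob_space (M n)" by (rule prob)
    then interpret prob_space "M n" .
    show "indep_vars (\<lambda>_. borel) (\<lambda>k. case k of Inl i \<Rightarrow> A n i | Inr i \<Rightarrow> B n i) UNIV" by (rule indep)
    show "\<gamma> \<le> prob {\<omega> \<in> space (M n). \<delta> \<le> B n 0 \<omega> - A n 0 \<omega>}" by (rule jump)
    show "expectation (B n 0) < expectation (A n 0)" by (rule bounds(3))
  qed (use A_id B_id A_pos B_pos A_int B_int A_var \<delta>\<gamma> in auto)
  obtain r where r: "0 \<le> r" "\<forall>\<^sub>F n in sequentially. prob_space.expectation (M n) (\<lambda>\<omega>. (A n 0 \<omega>)\<^sup>2) \<le> r"
    using A_sq_bdd by (rule limsup_ereal_lt_top_imp_eventually_le)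
  have EA_ge: "A_min \<le> prob_space.expectation (M n) (A n 0)" for n
    using bounds(1)[of n] rho0 by simp
  define C where "C = (r / \<delta> + (1 + r)) / \<gamma>"
  show ?thesis
  proof (intro conjI ex_le_bounds_eventually)
    show "\<forall>\<^sub>F n in sequentially.
            ennreal (\<delta> * \<gamma> / (1 + r)) \<le> ennreal (1 - \<rho> n) * (\<integral>\<^sup>+ \<omega>. ennreal_of_enat (busy_jobs (A n) (B n) \<omega>) \<partial>M n)
          \<and> ennreal (1 - \<rho> n) * (\<integral>\<^sup>+ \<omega>. ennreal_of_enat (busy_jobs (A n) (B n) \<omega>) \<partial>M n) \<le> ennreal (C / A_min)"
      using r(2) proof eventually_elim
      case (elim n)
      show ?case
        using gg1_queue.scaled_busy_jobs_bounds[OF queue elim Amin EA_ge] unfolding rho_def C_def by blast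
    qed
    show "\<forall>\<^sub>F n in sequentially.
            ennreal (\<delta> * \<gamma>) \<le> (\<integral>\<^sup>+ \<omega>. ennreal (idle_time (A n) (B n) \<omega>) \<partial>M n)
          \<and> (\<integral>\<^sup>+ \<omega>. ennreal (idle_time (A n) (B n) \<omega>) \<partial>M n) \<le> ennreal C"
      using r(2) proof eventually_elim
      case (elim n)
      show ?case
        using gg1_queue.idle_time_lower[OF queue] gg1_queue.idle_time_le_of_second_moment[OF queue elim]
        unfolding C_def by blast
    qed
  qed (use \<delta>\<gamma> r(1) in auto)
qed

end
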